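(* Let $n\ge 6$ and $k$ be coprime integers with $3\le k\le n-3$. Then $\mathsf{BO}(k,\mathbb{Z}/n\mathbb{Z})\ge k+1$; that is, there is a subset of $\mathbb{Z}/n\mathbb{Z}$ of cardinality $k$ which is not $k$-barycentric.
   Context: For a positive integer $k$, a set $\{g_1,\dots,g_k\}$ of $k$ distinct elements of a finite abelian group $G$ (written additively) is called $k$-barycentric if $\sum_{i=1}^k g_i = k\,g_j$ for some $1\le j\le k$. The $k$-th barycentric Olson constant $\mathsf{BO}(k,G)$ is the smallest integer $\ell$ such that every subset $A\subseteq G$ with $|A|\ge \ell$ contains a $k$-barycentric subset (so that always $\mathsf{BO}(k,G)\le |G|+1$). *)

theory Defs
  imports "HOL-Number_Theory.Number_Theory"
begin

text \<open>The cyclic group Z/nZ (n > 0) is modelled by the canonical representatives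
  {0..<n} :: int set, with addition taken modulo n.\<close>

definition zn_barycentric :: "nat \<Rightarrow> nat \<Rightarrow> int set \<Rightarrow> bool" where
  "zn_barycentric n k S \<longleftrightarrow>
     S \<subseteq> {0..<int n} \<and> card S = k \<and> (\<exists>g\<in>S. [\<Sum>S = int k * g] (mod int n))"

definition BO_Zn :: "nat \<Rightarrow> nat \<Rightarrow> nat" where
  "BO_Zn k n = (LEAST l. \<forall>A. A \<subseteq> {0..<int n} \<and> card A \<ge> l \<longrightarrow>
                            (\<exists>S\<subseteq>A. zn_barycentric n k S))"

end

theory Submission
  imports Defs
begin

text \<open>A set A of k nonzero residues whose sum is 0 modulo n has no k-barycentric subset: the only
  candidate is A itself, and k g = 0 with k coprime to n forces g = 0.  Such a set is built from
  pairs {j, n - j}, each summing to n, completed when k is odd by a triple with sum divisible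
  by n: {1, 2, n - 3}, or {n/2, n/2 + 1, n - 1} in the tight case k = n - 3.\<close>

definition mirror_pairs :: "int \<Rightarrow> int set \<Rightarrow> int set" where
  "mirror_pairs N T = T \<union> (\<lambda>j. N - j) ` T"

lemma
  fixes T :: "int set" and N :: int
  assumes "finite T" and T_lower_half: "\<forall>j\<in>T. 0 < j \<and> 2 * j < N"
  shows card_mirror_pairs: "card (mirror_pairs N T) = 2 * card T"
    and sum_mirror_pairs: "\<Sum>(mirror_pairs N T) = int (card T) * N"
    and mirror_pairs_subset: "mirror_pairs N T \<subseteq> {1..<N}"
proof -
  have inj: "inj_on (\<lambda>j. N - j) T" by (auto simp: inj_on_def)
  have "a \<noteq> N - b" if "a \<in> T" "b \<in> T" for a b
  proof -
    have "2 * a < N" "2 * b < N" using T_lower_half that by auto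
    then show ?thesis by linarith
  qed
  then have disj: "T \<inter> (\<lambda>j. N - j) ` T = {}" by blast
  show "card (mirror_pairs N T) = 2 * card T"
    using card_Un_disjoint[OF \<open>finite T\<close> finite_imageI[OF \<open>finite T\<close>] disj] card_image[OF inj]
    by (simp add: mirror_pairs_def)
  have "\<Sum>(mirror_pairs N T) = \<Sum>T + (\<Sum>j\<in>T. N - j)"
    using sum.union_disjoint[OF \<open>finite T\<close> finite_imageI[OF \<open>finite T\<close>] disj, of "\<lambda>x. x"]
      sum.reindex[OF inj, of "\<lambda>x. x"]
    by (simp add: mirror_pairs_def)
  also have "\<dots> = (\<Sum>j\<in>T. j + (N - j))" by (rule sum.distrib[symmetric])
  finally show "\<Sum>(mirror_pairs N T) = int (card T) * N" by simp
  show "mirror_pairs N T \<subseteq> {1..<N}" using T_lower_half by (force simp: mirror_pairs_def)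
qed

lemma zero_sum_union_mirror_pairs:
  fixes C T :: "int set" and N :: int
  assumes "finite C" "C \<subseteq> {1..<N}" "N dvd \<Sum>C"
    and "finite T" "\<forall>j\<in>T. 0 < j \<and> 2 * j < N"
    and disj: "C \<inter> mirror_pairs N T = {}"
  shows "C \<union> mirror_pairs N T \<subseteq> {1..<N}"
    and "card (C \<union> mirror_pairs N T) = card C + 2 * card T"
    and "N dvd \<Sum>(C \<union> mirror_pairs N T)"
proof -
  have fin: "finite (mirror_pairs N T)" using \<open>finite T\<close> by (simp add: mirror_pairs_def)
  show "C \<union> mirror_pairs N T \<subseteq> {1..<N}"
    using \<open>C \<subseteq> {1..<N}\<close> mirror_pairs_subset[OF assms(4,5)] by blast
  show "card (C \<union> mirror_pairs N T) = card C + 2 * card T"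
    using card_Un_disjoint[OF \<open>finite C\<close> fin disj] card_mirror_pairs[OF assms(4,5)] by simp
  show "N dvd \<Sum>(C \<union> mirror_pairs N T)"
    using sum.union_disjoint[OF \<open>finite C\<close> fin disj, of "\<lambda>x. x"] sum_mirror_pairs[OF assms(4,5)]
      \<open>N dvd \<Sum>C\<close> by simp
qed

lemma zero_sum_subset_exists:
  fixes n k :: nat
  assumes "3 \<le> k" "k + 3 \<le> n"
  shows "\<exists>A. A \<subseteq> {1..<int n} \<and> card A = k \<and> int n dvd \<Sum>A"
proof -
  define N where "N = int n"
  have "\<exists>C T. finite C \<and> C \<subseteq> {1..<N} \<and> N dvd \<Sum>C \<and> finite T \<and> (\<forall>j\<in>T. 0 < j \<and> 2 * j < N)
           \<and> C \<inter> mirror_pairs N T = {} \<and> card C + 2 * card T = k"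
  proof (cases "even k")
    case True
    have "card {1..int k div 2} = k div 2" by simp
    with True assms show ?thesis unfolding N_def
      by (intro exI[of _ "{}"] exI[of _ "{1..int k div 2}"]) auto
  next
    case False
    show ?thesis
    proof (cases "k + 3 < n")
      case True
      define C where "C = {1, 2, N - 3}"
      define T where "T = {4..(int k + 3) div 2}"
      have C: "finite C" "C \<subseteq> {1..<N}" "N dvd \<Sum>C" "card C = 3"
        using assms unfolding C_def N_def by auto
      have T: "finite T" "\<forall>j\<in>T. 0 < j \<and> 2 * j < N"
        using True unfolding T_def N_def by auto
      have "int (card T) = (int k + 3) div 2 - 3" using assms unfolding T_def by simp
      with False \<open>card C = 3\<close> have "card C + 2 * card T = k" by presburger
      moreover have "C \<inter> mirror_pairs N T = {}"
        using True unfolding C_def T_def N_def mirror_pairs_def by auto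
      ultimately show ?thesis using C T by blast
    next
      case tight: False
      define h where "h = N div 2"
      have N_eq: "N = 2 * h" and "h \<ge> 3"
        using False tight assms unfolding h_def N_def by (auto elim!: oddE)
      define C where "C = {h, N - 1, h + 1}"
      define T where "T = {2..h - 2}"
      have C: "finite C" "C \<subseteq> {1..<N}" "N dvd \<Sum>C" "card C = 3"
        using N_eq \<open>h \<ge> 3\<close> unfolding C_def by auto
      have T: "finite T" "\<forall>j\<in>T. 0 < j \<and> 2 * j < N"
        using N_eq unfolding T_def by auto
      have "int (card T) = h - 3" using \<open>h \<ge> 3\<close> unfolding T_def by simp
      with N_eq \<open>card C = 3\<close> tight assms have "card C + 2 * card T = k"
        unfolding N_def by linarith
      moreover have "C \<inter> mirror_pairs N T = {}"
        using N_eq unfolding C_def T_def mirror_pairs_def by auto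
      ultimately show ?thesis using C T by blast
    qed
  qed
  then obtain C T where "finite C" "C \<subseteq> {1..<N}" "N dvd \<Sum>C" "finite T"
    "\<forall>j\<in>T. 0 < j \<and> 2 * j < N" "C \<inter> mirror_pairs N T = {}" "card C + 2 * card T = k"
    by blast
  with zero_sum_union_mirror_pairs[of C N T] show ?thesis unfolding N_def by metis
qed

lemma zero_sum_set_not_barycentric:
  fixes A :: "int set"
  assumes "A \<subseteq> {1..<int n}" "card A = k" "int n dvd \<Sum>A" "coprime k n"
  shows "\<not> (\<exists>S\<subseteq>A. zn_barycentric n k S)"
proof
  assume "\<exists>S\<subseteq>A. zn_barycentric n k S"
  then obtain S where S: "S \<subseteq> A" "zn_barycentric n k S" by blast
  have "finite A" using assms(1) finite_subset by blast
  then have "S = A" using S card_subset_eq assms(2) by (auto simp: zn_barycentric_def)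
  then obtain g where g: "g \<in> A" "[\<Sum>A = int k * g] (mod int n)"
    using S(2) by (auto simp: zn_barycentric_def)
  then have "int n dvd int k * g" using assms(3) by (metis cong_dvd_iff)
  moreover have "coprime (int n) (int k)" using assms(4) by (simp add: coprime_commute)
  ultimately have "int n dvd g" by (simp add: coprime_dvd_mult_right_iff)
  moreover have "0 < g" "g < int n" using g(1) assms(1) by auto
  ultimately show False using zdvd_imp_le by fastforce
qed

lemma BO_Zn_greater_card:
  assumes "A \<subseteq> {0..<int n}" "\<not> (\<exists>S\<subseteq>A. zn_barycentric n k S)"
  shows "BO_Zn k n \<ge> card A + 1"
proof -
  define P where "P l \<longleftrightarrow> (\<forall>A. A \<subseteq> {0..<int n} \<and> card A \<ge> l \<longrightarrow> (\<exists>S\<subseteq>A. zn_barycentric n k S))"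
    for l
  have "P (n + 1)"
    unfolding P_def
  proof (intro allI impI)
    fix B :: "int set" assume B: "B \<subseteq> {0..<int n} \<and> n + 1 \<le> card B"
    then have "card B \<le> n" using card_mono[of "{0..<int n}" B] by simp
    with B show "\<exists>S\<subseteq>B. zn_barycentric n k S" by simp
  qed
  then have "P (Least P)" by (rule LeastI)
  moreover have "\<not> P l" if "l \<le> card A" for l using assms that unfolding P_def by blast
  ultimately have "\<not> Least P \<le> card A" by blast
  then show ?thesis unfolding BO_Zn_def P_def[symmetric] by simp
qed

theorem mainTheorem4:
  fixes n k :: nat
  assumes "n \<ge> 6" and "coprime k n" and "3 \<le> k" and "k \<le> n - 3"
  shows "BO_Zn k n \<ge> k + 1"
proof -
  have "k + 3 \<le> n" using assms by linarith
  then obtain A where A: "A \<subseteq> {1..<int n}" "card A = k" "int n dvd \<Sum>A"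
    using zero_sum_subset_exists \<open>3 \<le> k\<close> by blast
  then have "A \<subseteq> {0..<int n}" by auto
  with zero_sum_set_not_barycentric[OF A assms(2)] show ?thesis
    using BO_Zn_greater_card \<open>card A = k\<close> by metis
qed

end
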